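(* Let $K\ge 2$ and positive integers $M,N,d$ with $d\le\min(M,N)$. If the symmetric system $(M\times N,d)^K$ is proper, then \[ \frac{dK}{\min(M,N)}\le 1+\frac{\max(M,N)}{\min(M,N)}-\frac{d}{\min(M,N)}. \]
   Context: $(M\times N,d)^K$ is the $K$-user interference network where every transmitter has $M$ antennas, every receiver has $N$ antennas and every user demands $d$ degrees of freedom. Associate abstract variables: for each transmitter $j$ and $n\in\{1,\dots,d\}$, $M-d$ variables $x^{[j]}_{n,i}$; for each receiver $k$ and $m\in\{1,\dots,d\}$, $N-d$ variables $y^{[k]}_{m,i}$. Equations are the symbols $E^{mn}_{kj}$ for $j\ne k$, $m,n\in\{1,\dots,d\}$, with $\mathrm{var}(E^{mn}_{kj})=\{x^{[j]}_{n,i}\}_i\cup\{y^{[k]}_{m,i}\}_i$; $\mathcal E$ is the set of all equations. The system is proper if for every $S\subseteq\mathcal E$, $|S|\le\left|\bigcup_{E\in S}\mathrm{var}(E)\right|$. *)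

theory Defs
  imports Complex_Main
begin

text \<open>Indices are 0-based:
  users 0..K-1, streams 0..d-1, variable index 0..M-d-1 (resp. 0..N-d-1).
  Tx_var j n i stands for x^[j]_{n,i}; Rx_var k m i stands for y^[k]_{m,i}.\<close>
datatype ia_var = Tx_var nat nat nat | Rx_var nat nat nat

text \<open>An equation E^{mn}_{kj} is represented by the tuple (k, j, m, n).\<close>
type_synonym ia_eq = "nat \<times> nat \<times> nat \<times> nat"

definition ia_equations :: "nat \<Rightarrow> nat \<Rightarrow> ia_eq set" where
  "ia_equations K d = {(k, j, m, n). k < K \<and> j < K \<and> j \<noteq> k \<and> m < d \<and> n < d}"

definition ia_vars :: "nat \<Rightarrow> nat \<Rightarrow> nat \<Rightarrow> ia_eq \<Rightarrow> ia_var set" where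
  "ia_vars M N d E = (case E of (k, j, m, n) \<Rightarrow>
      {Tx_var j n i | i. i < M - d} \<union> {Rx_var k m i | i. i < N - d})"

definition proper_system :: "nat \<Rightarrow> nat \<Rightarrow> nat \<Rightarrow> nat \<Rightarrow> bool" where
  "proper_system M N d K \<longleftrightarrow>
     (\<forall>S \<subseteq> ia_equations K d. card S \<le> card (\<Union>E\<in>S. ia_vars M N d E))"

end

theory Submission
  imports Defs
begin

text \<open>
  The corollary is the counting consequence of properness: applying the defining
  inequality to the set S of ALL equations gives
    |equations| = K (K-1) d^2  \<le>  |variables| \<le> K d (M-d) + K d (N-d),
  i.e. after cancelling K d, (K-1) d \<le> (M-d) + (N-d), or d (K+1) \<le> M + N.
  Dividing by min M N and using M + N = min M N + max M N gives the claim.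
\<close>

lemma card_ia_equations: "card (ia_equations K d) = K * ((K - 1) * (d * d))"
proof -
  have "ia_equations K d = (SIGMA k:{..<K}. ({..<K} - {k}) \<times> {..<d} \<times> {..<d})"
    unfolding ia_equations_def by auto
  then show ?thesis
    by (simp add: card_SigmaI card_cartesian_product)
qed

lemma card_all_ia_vars_le:
  "card (\<Union>E\<in>ia_equations K d. ia_vars M N d E) \<le> K * d * (M - d) + K * d * (N - d)"
proof -
  let ?Tx = "(\<lambda>(j, n, i). Tx_var j n i) ` ({..<K} \<times> {..<d} \<times> {..<M - d})"
  let ?Rx = "(\<lambda>(k, m, i). Rx_var k m i) ` ({..<K} \<times> {..<d} \<times> {..<N - d})"
  have "(\<Union>E\<in>ia_equations K d. ia_vars M N d E) \<subseteq> ?Tx \<union> ?Rx"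
    unfolding ia_equations_def ia_vars_def by (auto simp: image_iff)
  then have "card (\<Union>E\<in>ia_equations K d. ia_vars M N d E) \<le> card (?Tx \<union> ?Rx)"
    by (intro card_mono) auto
  also have "\<dots> \<le> card ?Tx + card ?Rx"
    by (rule card_Un_le)
  also have "card ?Tx \<le> K * d * (M - d)"
    using card_image_le[of "{..<K} \<times> {..<d} \<times> {..<M - d}"]
    by (simp add: card_cartesian_product mult.assoc)
  also have "card ?Rx \<le> K * d * (N - d)"
    using card_image_le[of "{..<K} \<times> {..<d} \<times> {..<N - d}"]
    by (simp add: card_cartesian_product mult.assoc)
  finally show ?thesis by simp
qed

lemma proper_system_counting_bound:
  fixes K M N d :: nat
  assumes proper: "proper_system M N d K"
    and "K > 0" and "d > 0" and d_le: "d \<le> M" "d \<le> N"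
  shows "d * (K + 1) \<le> M + N"
proof -
  have "card (ia_equations K d) \<le> card (\<Union>E\<in>ia_equations K d. ia_vars M N d E)"
    using proper unfolding proper_system_def by blast
  also have "\<dots> \<le> K * d * (M - d) + K * d * (N - d)"
    by (rule card_all_ia_vars_le)
  finally have "(K * d) * ((K - 1) * d) \<le> (K * d) * ((M - d) + (N - d))"
    unfolding card_ia_equations by (simp add: algebra_simps)
  then have "(K - 1) * d \<le> (M - d) + (N - d)"
    using \<open>K > 0\<close> \<open>d > 0\<close> by simp
  then show ?thesis
    using d_le by (simp add: algebra_simps diff_mult_distrib)
qed

lemma divide_normalized_le:
  fixes a b c m :: real
  assumes "m > 0" and "a \<le> m + b - c"
  shows "a / m \<le> 1 + b / m - c / m"
proof -
  have "a / m \<le> (m + b - c) / m"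
    using assms by (simp add: divide_right_mono)
  also have "\<dots> = 1 + b / m - c / m"
    using \<open>m > 0\<close> by (simp add: diff_divide_distrib add_divide_distrib)
  finally show ?thesis .
qed

theorem corollary1:
  fixes K M N d :: nat
  assumes "K \<ge> 2" and "M > 0" and "N > 0" and "d > 0" and "d \<le> min M N"
    and "proper_system M N d K"
  shows "real (d * K) / real (min M N)
           \<le> 1 + real (max M N) / real (min M N) - real d / real (min M N)"
proof (rule divide_normalized_le)
  show "real (min M N) > 0"
    using assms by simp
  have "d * (K + 1) \<le> M + N"
    using proper_system_counting_bound assms by simp
  moreover have "M + N = min M N + max M N"
    by (simp add: min_def max_def)
  ultimately have "real (d * K) + real d \<le> real (min M N) + real (max M N)"
    by (metis add_mult_distrib2 nat_mult_1_right of_nat_add of_nat_le_iff)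
  then show "real (d * K) \<le> real (min M N) + real (max M N) - real d"
    by linarith
qed

end
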